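(* For every Hilbert space $H$ with $\dim H\ge2$, there exist an infinite semigroup $G$ with unit which is not left-cancellative, a contractive representation $\mathcal S=(S(g))_{g\in G}$ of $G$ on $H$, a representation $\mathcal T=(T(g))_{g\in G}$ of $G$ on $H$, and operators $A,B\in\mathcal L(H)$ such that $$\sum_{g\in G}\|T(g)-AS(g)B\|^2<\infty,$$ but $\mathcal T$ is not similar to a contractive representation of $G$ (i.e. there is no invertible $R\in\mathcal L(H)$ with $\|R^{-1}T(g)R\|\le1$ for all $g\in G$).
   Context: A semigroup $(G,\cdot)$ is left-cancellative if $f\cdot a=f\cdot b$ implies $a=b$ for all $f,a,b\in G$. A representation of a unital semigroup $G$ on $H$ is a map $g\mapsto T(g)\in\mathcal L(H)$ with $T(gh)=T(g)T(h)$ and $T(e)=I$; it is contractive if all $T(g)$ are contractions. *)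

theory Defs
  imports "HOL-Analysis.Analysis"
begin

text \<open>A complex Hilbert space is modelled as a real Hilbert space
  (type class real_inner + complete_space) together with a complex structure J
  (multiplication by the imaginary unit) compatible with the inner product.\<close>

definition complex_structure :: "('a::real_inner \<Rightarrow> 'a) \<Rightarrow> bool" where
  "complex_structure J \<longleftrightarrow> linear J \<and> (\<forall>x. J (J x) = - x) \<and>
     (\<forall>x y. inner (J x) (J y) = inner x y)"

text \<open>Complex dimension at least 2: the space is not the complex span of a single vector.\<close>
definition cdim_ge2 :: "('a::real_inner \<Rightarrow> 'a) \<Rightarrow> bool" where
  "cdim_ge2 J \<longleftrightarrow> \<not> (\<exists>v. \<forall>x. x \<in> span {v, J v})"

text \<open>Bounded complex-linear operators, i.e. elements of L(H).\<close>
definition bop :: "('a::real_inner \<Rightarrow> 'a) \<Rightarrow> ('a \<Rightarrow> 'a) \<Rightarrow> bool" where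
  "bop J T \<longleftrightarrow> bounded_linear T \<and> (\<forall>x. T (J x) = J (T x))"

definition unital_semigroup :: "('g \<Rightarrow> 'g \<Rightarrow> 'g) \<Rightarrow> 'g \<Rightarrow> bool" where
  "unital_semigroup m e \<longleftrightarrow> (\<forall>a b c. m (m a b) c = m a (m b c)) \<and>
     (\<forall>a. m e a = a \<and> m a e = a)"

definition left_cancellative :: "('g \<Rightarrow> 'g \<Rightarrow> 'g) \<Rightarrow> bool" where
  "left_cancellative m \<longleftrightarrow> (\<forall>f a b. m f a = m f b \<longrightarrow> a = b)"

definition representation ::
  "('a::real_inner \<Rightarrow> 'a) \<Rightarrow> ('g \<Rightarrow> 'g \<Rightarrow> 'g) \<Rightarrow> 'g \<Rightarrow> ('g \<Rightarrow> 'a \<Rightarrow> 'a) \<Rightarrow> bool" where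
  "representation J m e T \<longleftrightarrow> (\<forall>g. bop J (T g)) \<and>
     (\<forall>g h. T (m g h) = T g \<circ> T h) \<and> T e = id"

definition contractive :: "('g \<Rightarrow> 'a::real_normed_vector \<Rightarrow> 'a) \<Rightarrow> bool" where
  "contractive T \<longleftrightarrow> (\<forall>g. onorm (T g) \<le> 1)"

definition similar_to_contractive ::
  "('a::real_inner \<Rightarrow> 'a) \<Rightarrow> ('g \<Rightarrow> 'a \<Rightarrow> 'a) \<Rightarrow> bool" where
  "similar_to_contractive J T \<longleftrightarrow> (\<exists>R Rinv. bop J R \<and> bop J Rinv \<and>
     R \<circ> Rinv = id \<and> Rinv \<circ> R = id \<and> (\<forall>g. onorm (Rinv \<circ> T g \<circ> R) \<le> 1))"

end

theory Submission imports Defs begin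

text \<open>Take for G the naturals with unit 0 and g h = g for g \<noteq> 0, a left-zero semigroup
  with an adjoined unit; a family sending 0 to I and every other element to an operator X
  with X Y = X is a representation. Let P be the orthogonal projection onto the complex line
  through a unit vector u and Q the oblique projection with the same kernel onto the line
  through a vector w \<noteq> u with <w, u> = 1. Put S g = P and T g = P for g \<noteq> 0, except
  T 1 = Q; with A = B = I the sum has a single nonzero term. If R^-1 T R were contractive,
  R^-1 P R and R^-1 Q R would be contractive idempotents with a common kernel. Contractive
  idempotents are orthogonal projections, hence determined by their kernel, so P = Q.\<close>

lemma inner_eq_0_if_norm_le_norm_add_scaleR:
  fixes z k :: "'a::real_inner"
  assumes "\<And>t. norm z \<le> norm (z + t *\<^sub>R k)"
  shows "inner z k = 0"
proof -
  define c where "c = inner z k"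
  define K where "K = inner k k"
  have K: "K \<ge> 0" unfolding K_def by simp
  have "0 \<le> 2 * t * c + t\<^sup>2 * K" for t
  proof -
    have "(norm z)\<^sup>2 \<le> (norm (z + t *\<^sub>R k))\<^sup>2"
      using assms[of t] by (simp add: power_mono)
    then show ?thesis
      unfolding power2_norm_eq_inner c_def K_def
      by (simp add: inner_add_left inner_add_right inner_commute power2_eq_square algebra_simps)
  qed
  moreover have "2 * (- c / (K + 1)) * c + (- c / (K + 1))\<^sup>2 * K = - c\<^sup>2 * (K + 2) / (K + 1)\<^sup>2"
    using K by (simp add: power_divide divide_simps) (simp add: algebra_simps power2_eq_square)
  ultimately have "0 \<le> - c\<^sup>2 * (K + 2) / (K + 1)\<^sup>2"
    by metis
  then have "c\<^sup>2 * (K + 2) \<le> 0"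
    using K by (simp add: divide_le_0_iff add_nonneg_eq_0_iff)
  then show ?thesis
    using K unfolding c_def by (simp add: mult_le_0_iff)
qed

lemma contractive_idempotent_range_orthogonal_kernel:
  fixes E :: "'a::real_inner \<Rightarrow> 'a"
  assumes "linear E" and "\<And>x. norm (E x) \<le> norm x" and "\<And>x. E (E x) = E x" and "E k = 0"
  shows "inner (E z) k = 0"
proof (rule inner_eq_0_if_norm_le_norm_add_scaleR)
  fix t
  have "E (E z + t *\<^sub>R k) = E z"
    using assms(3,4) by (simp add: linear_add[OF assms(1)] linear_scale[OF assms(1)])
  then show "norm (E z) \<le> norm (E z + t *\<^sub>R k)"
    using assms(2) by metis
qed

lemma contractive_idempotents_same_kernel_eq:
  fixes E F :: "'a::real_inner \<Rightarrow> 'a"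
  assumes "linear E" and "linear F"
    and "\<And>x. norm (E x) \<le> norm x" and "\<And>x. norm (F x) \<le> norm x"
    and EF: "\<And>x. E (F x) = E x" and FE: "\<And>x. F (E x) = F x"
  shows "E = F"
proof
  fix y
  have EE: "E (E x) = E x" and FF: "F (F x) = F x" for x
    by (metis EF FE)+
  define b where "b = F y - E y"
  have "E b = 0" and "F b = 0"
    unfolding b_def by (simp_all add: linear_diff[OF assms(1)] linear_diff[OF assms(2)] EF EE FE FF)
  then have "inner (E y) b = 0" and "inner (F y) b = 0"
    using contractive_idempotent_range_orthogonal_kernel assms EE FF by metis+
  then have "inner b b = 0"
    unfolding b_def by (simp add: inner_diff_left)
  then show "E y = F y"
    unfolding b_def by simp
qed

lemma norm_le_if_onorm_le_one:
  assumes "bounded_linear f" and "onorm f \<le> 1"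
  shows "norm (f x) \<le> norm x"
  using onorm[OF assms(1), of x] mult_right_mono[OF assms(2) norm_ge_zero, of x] by simp

lemma not_similar_to_contractive_if_same_kernel_idempotents:
  assumes "bounded_linear P" and "bounded_linear Q"
    and PQ: "P \<circ> Q = P" and QP: "Q \<circ> P = Q" and "P \<noteq> Q"
    and "T g = P" and "T h = Q"
  shows "\<not> similar_to_contractive J T"
proof
  assume "similar_to_contractive J T"
  then obtain R Rinv where "bop J R" and "bop J Rinv"
    and R_Rinv: "R \<circ> Rinv = id" and "Rinv \<circ> R = id"
    and contr: "\<And>g. onorm (Rinv \<circ> T g \<circ> R) \<le> 1"
    unfolding similar_to_contractive_def by blast
  define E where "E = Rinv \<circ> P \<circ> R"
  define F where "F = Rinv \<circ> Q \<circ> R"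
  have "bounded_linear (Rinv \<circ> X \<circ> R)" if "bounded_linear X" for X
    using \<open>bop J R\<close> \<open>bop J Rinv\<close> that unfolding bop_def comp_def
    by (auto intro: bounded_linear_compose)
  then have "bounded_linear E" and "bounded_linear F"
    unfolding E_def F_def using assms(1,2) by blast+
  moreover have "onorm E \<le> 1" and "onorm F \<le> 1"
    unfolding E_def F_def using contr[of g] contr[of h] assms(6,7) by simp_all
  moreover have "E (F x) = E x" and "F (E x) = F x" for x
    unfolding E_def F_def using R_Rinv PQ QP by (simp_all add: fun_eq_iff)
  ultimately have "E = F"
    by (intro contractive_idempotents_same_kernel_eq norm_le_if_onorm_le_one bounded_linear.linear)
  moreover have "R (Rinv y) = y" for y
    using R_Rinv pointfree_idE by metis
  ultimately have "P x = Q x" for x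
    unfolding E_def F_def by (metis comp_apply)
  then show False
    using \<open>P \<noteq> Q\<close> by blast
qed

lemma complex_structure_linear: "complex_structure J \<Longrightarrow> linear J"
  and complex_structure_J_J: "complex_structure J \<Longrightarrow> J (J x) = - x"
  and complex_structure_inner_J_J: "complex_structure J \<Longrightarrow> inner (J x) (J y) = inner x y"
  unfolding complex_structure_def by auto

lemma complex_structure_inner_J_left:
  assumes "complex_structure J"
  shows "inner (J x) y = - inner x (J y)"
  using complex_structure_inner_J_J[OF assms, of "J x" y] complex_structure_J_J[OF assms] by simp

lemma complex_structure_inner_J_self:
  assumes "complex_structure J"
  shows "inner u (J u) = 0"
  using complex_structure_inner_J_left[OF assms, of u u] by (simp add: inner_commute)

text \<open>The complex rank-one operator x \<mapsto> <x, u> w: the complex inner product is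
  <x, u> + i <x, J u> in terms of the real one.\<close>

definition rank_one :: "('a::real_inner \<Rightarrow> 'a) \<Rightarrow> 'a \<Rightarrow> 'a \<Rightarrow> 'a \<Rightarrow> 'a" where
  "rank_one J u w x = inner x u *\<^sub>R w + inner x (J u) *\<^sub>R J w"

lemma bounded_linear_rank_one: "bounded_linear (rank_one J u w)"
  unfolding rank_one_def
  by (intro bounded_linear_add bounded_linear_scaleR_left bounded_linear_inner_left
      bounded_linear_compose[of "\<lambda>r. r *\<^sub>R _"])

lemma rank_one_J:
  assumes "complex_structure J"
  shows "rank_one J u w (J x) = J (rank_one J u w x)"
  using complex_structure_J_J[OF assms] complex_structure_inner_J_J[OF assms, of x u]
    complex_structure_inner_J_left[OF assms, of x u]
  by (simp add: rank_one_def linear_add[OF complex_structure_linear[OF assms]]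
      linear_scale[OF complex_structure_linear[OF assms]])

lemma bop_rank_one: "complex_structure J \<Longrightarrow> bop J (rank_one J u w)"
  unfolding bop_def using bounded_linear_rank_one rank_one_J by blast

lemma rank_one_comp_rank_one:
  assumes "complex_structure J" and "inner w u = 1" and "inner w (J u) = 0"
  shows "rank_one J u v \<circ> rank_one J u w = rank_one J u v"
proof
  fix x
  have lin: "linear (rank_one J u v)"
    using bounded_linear_rank_one bounded_linear.linear by blast
  have "rank_one J u v w = v" and "rank_one J u v (J w) = J v"
    using assms complex_structure_inner_J_J[OF assms(1), of w u]
      complex_structure_inner_J_left[OF assms(1), of w u]
    by (simp_all add: rank_one_def)
  then show "(rank_one J u v \<circ> rank_one J u w) x = rank_one J u v x"
    by (simp add: rank_one_def[of J u w] linear_add[OF lin] linear_scale[OF lin])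
       (simp add: rank_one_def)
qed

lemma onorm_rank_one_self_le:
  assumes "complex_structure J" and "norm u = 1"
  shows "onorm (rank_one J u u) \<le> 1"
proof (rule onorm_bound)
  fix x
  define p where "p = rank_one J u u x"
  have "inner u u = 1"
    using assms(2) norm_eq_1 by blast
  moreover have "inner (J u) (J u) = 1"
    using calculation complex_structure_inner_J_J[OF assms(1)] by simp
  moreover have "inner u (J u) = 0" and "inner (J u) u = 0"
    using complex_structure_inner_J_self[OF assms(1)] inner_commute by metis+
  ultimately have "inner p p = inner x p"
    unfolding p_def rank_one_def by (simp add: inner_add_left inner_add_right power2_eq_square)
  then have "inner x x = inner p p + inner (x - p) (x - p)"
    by (simp add: inner_diff_left inner_diff_right inner_commute)
  then have "(norm p)\<^sup>2 \<le> (norm x)\<^sup>2"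
    by (simp add: power2_norm_eq_inner)
  then show "norm (rank_one J u u x) \<le> 1 * norm x"
    unfolding p_def using power2_le_imp_le by fastforce
qed simp

lemma cdim_ge2_obtain_oblique_pair:
  assumes "complex_structure J" and "cdim_ge2 J"
  obtains u w where "norm u = 1" and "inner w u = 1" and "inner w (J u) = 0" and "w \<noteq> u"
proof -
  obtain x0 where "x0 \<notin> span {0, J 0}"
    using assms(2) unfolding cdim_ge2_def by blast
  then have "x0 \<noteq> 0"
    using span_zero by blast
  define u where "u = x0 /\<^sub>R norm x0"
  have "norm u = 1"
    unfolding u_def using \<open>x0 \<noteq> 0\<close> by simp
  then have uu: "inner u u = 1" and JuJu: "inner (J u) (J u) = 1"
    using norm_eq_1 complex_structure_inner_J_J[OF assms(1)] by auto
  have uJu: "inner u (J u) = 0" and Juu: "inner (J u) u = 0"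
    using complex_structure_inner_J_self[OF assms(1)] inner_commute by metis+
  obtain x1 where x1: "x1 \<notin> span {u, J u}"
    using assms(2) unfolding cdim_ge2_def by blast
  define v where "v = x1 - rank_one J u u x1"
  have "rank_one J u u x1 \<in> span {u, J u}"
    unfolding rank_one_def by (intro span_add span_scale span_base) auto
  then have "v \<noteq> 0"
    unfolding v_def using x1 by auto
  moreover have "inner v u = 0" and "inner v (J u) = 0"
    unfolding v_def rank_one_def by (simp_all add: inner_diff_left inner_add_left uu JuJu uJu Juu)
  ultimately show thesis
    using that[of u "u + v"] \<open>norm u = 1\<close> by (simp add: inner_add_left uu uJu)
qed

lemma cdim_ge2_obtain_same_kernel_projections:
  assumes "complex_structure J" and "cdim_ge2 J"
  obtains P Q where "bop J P" and "bop J Q" and "onorm P \<le> 1" and "P \<noteq> Q"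
    and "P \<circ> P = P" and "P \<circ> Q = P" and "Q \<circ> P = Q" and "Q \<circ> Q = Q"
proof -
  obtain u w where u: "norm u = 1" and w: "inner w u = 1" "inner w (J u) = 0" "w \<noteq> u"
    using cdim_ge2_obtain_oblique_pair assms by blast
  have uu: "inner u u = 1" and uJu: "inner u (J u) = 0"
    using u norm_eq_1 complex_structure_inner_J_self[OF assms(1)] by auto
  have "rank_one J u u u \<noteq> rank_one J u w u"
    using uu uJu w(3) by (simp add: rank_one_def)
  then have "rank_one J u u \<noteq> rank_one J u w"
    by metis
  then show thesis
    using that bop_rank_one onorm_rank_one_self_le rank_one_comp_rank_one assms(1) u uu uJu w
    by metis
qed

definition left_zero_unit :: "nat \<Rightarrow> nat \<Rightarrow> nat" where
  "left_zero_unit g h = (if g = 0 then h else g)"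

lemma unital_semigroup_left_zero_unit: "unital_semigroup left_zero_unit 0"
  unfolding unital_semigroup_def left_zero_unit_def by auto

lemma not_left_cancellative_left_zero_unit: "\<not> left_cancellative left_zero_unit"
  unfolding left_cancellative_def left_zero_unit_def by (metis one_neq_zero zero_neq_numeral)

lemma representation_left_zero_unitI:
  assumes "T 0 = id" and "\<And>g. bop J (T g)"
    and "\<And>g h. g \<noteq> 0 \<Longrightarrow> h \<noteq> 0 \<Longrightarrow> T g \<circ> T h = T g"
  shows "representation J left_zero_unit 0 T"
proof -
  have "T (left_zero_unit g h) = T g \<circ> T h" for g h
    using assms(1) assms(3)[of g h] by (cases "g = 0"; cases "h = 0") (simp_all add: left_zero_unit_def)
  then show ?thesis
    using assms(1,2) unfolding representation_def by blast
qed

theorem proposition4p6: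
  fixes J :: "'a::{real_inner, complete_space} \<Rightarrow> 'a"
  assumes "complex_structure J" and "cdim_ge2 J"
  shows "\<exists>(m :: nat \<Rightarrow> nat \<Rightarrow> nat) e S T A B.
           unital_semigroup m e \<and> infinite (UNIV :: nat set) \<and> \<not> left_cancellative m \<and>
           representation J m e S \<and> contractive S \<and>
           representation J m e T \<and> bop J A \<and> bop J B \<and>
           (\<lambda>g. (onorm (\<lambda>x. T g x - A (S g (B x))))\<^sup>2) summable_on UNIV \<and>
           \<not> similar_to_contractive J T"
proof -
  obtain P Q where bop: "bop J P" "bop J Q" and "onorm P \<le> 1" and "P \<noteq> Q"
    and PQ: "P \<circ> P = P" "P \<circ> Q = P" "Q \<circ> P = Q" "Q \<circ> Q = Q"
    using cdim_ge2_obtain_same_kernel_projections assms by blast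
  have bop_id: "bop J id"
    by (simp add: bop_def id_def bounded_linear_ident)
  define S where "S g = (if g = 0 then id else P)" for g :: nat
  define T where "T g = (if g = 0 then id else if g = 1 then Q else P)" for g :: nat
  have "(\<lambda>g. (onorm (\<lambda>x. T g x - id (S g (id x))))\<^sup>2) summable_on UNIV \<longleftrightarrow>
        (\<lambda>g. (onorm (\<lambda>x. T g x - id (S g (id x))))\<^sup>2) summable_on {1}"
    by (rule summable_on_cong_neutral) (auto simp: S_def T_def onorm_zero)
  then have "(\<lambda>g. (onorm (\<lambda>x. T g x - id (S g (id x))))\<^sup>2) summable_on UNIV"
    by simp
  moreover have "contractive S"
    unfolding contractive_def S_def using \<open>onorm P \<le> 1\<close> onorm_id_le by (simp add: id_def)
  moreover have "representation J left_zero_unit 0 S" and "representation J left_zero_unit 0 T"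
    using PQ bop bop_id by (auto intro!: representation_left_zero_unitI simp: S_def T_def)
  moreover have "\<not> similar_to_contractive J T"
    using bop \<open>P \<noteq> Q\<close> PQ
    by (intro not_similar_to_contractive_if_same_kernel_idempotents[of P Q T 2 1])
       (auto simp: bop_def T_def)
  ultimately show ?thesis
    using unital_semigroup_left_zero_unit not_left_cancellative_left_zero_unit bop_id by blast
qed

end
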